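(* Let $G$ be a graph with vertex set $V$ and let $S,T$ be disjoint subsets of $V$. Then there exist a graph $G'$ on $V$ with $d_{G'}(v)=d_G(v)$ for all $v\in V$, and disjoint subsets $S',T'\subseteq V$ with $|S'|=|S|$ and $|T'|=|T|$, such that $d_{G'}(s)\le d_{G'}(v)$ for all $s\in S'$ and $v\in V\setminus S'$, $d_{G'}(t)\ge d_{G'}(v)$ for all $t\in T'$ and $v\in V\setminus T'$, and \[|E_{G'}(S';V\setminus T')|\le|E_G(S;V\setminus T)|.\]
   Context: All graphs are finite and simple; $d_G(v)$ is the degree of $v$ in $G$. For disjoint $S,T\subseteq V$, $E_G(S;V\setminus T)$ denotes the set of edges of $G$ that either have both endpoints in $S$, or have one endpoint in $S$ and the other in $V\setminus(S\cup T)$. *)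

theory Defs
  imports Main
begin

definition simple_graph :: "'a set \<Rightarrow> 'a set set \<Rightarrow> bool" where
  "simple_graph V E \<longleftrightarrow> finite V \<and> (\<forall>e\<in>E. \<exists>x y. x \<in> V \<and> y \<in> V \<and> x \<noteq> y \<and> e = {x, y})"

definition degree :: "'a set set \<Rightarrow> 'a \<Rightarrow> nat" where
  "degree E v = card {e \<in> E. v \<in> e}"

text \<open>E_G(S; V minus T): edges with both endpoints in S, or one endpoint in S and
  the other in V minus (S union T).\<close>
definition edges_ST :: "'a set \<Rightarrow> 'a set set \<Rightarrow> 'a set \<Rightarrow> 'a set \<Rightarrow> 'a set set" where
  "edges_ST V E S T = {e \<in> E. (\<exists>x y. e = {x, y} \<and> x \<in> S \<and> y \<in> S) \<or>
       (\<exists>x y. e = {x, y} \<and> x \<in> S \<and> y \<in> V - (S \<union> T))}"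

end

theory Submission imports Defs "HOL-Combinatorics.Transposition" begin

(* Among all graphs on V with the degrees of G, taken together with disjoint sets S', T' of
   sizes |S|, |T| that do not increase the edge count, choose one minimising the weight
   \<Sum>\<^sub>S' d + \<Sum>\<^sub>V-T' d.  If an ordering condition failed, there would be vertices a, b
   with d b < d a such that a \<in> S', b \<notin> S' or b \<in> T', a \<notin> T', and b is no worse placed
   than a (b \<in> S' implies a \<in> S', a \<in> T' implies b \<in> T').  Replacing d a - d b edges {a, x}
   by {b, x}, for x adjacent to a but not to b, cannot increase the edge count, and relabelling
   by the transposition of a and b then restores all degrees while exchanging the roles of a
   and b in S', T'.  This strictly lowers the weight, a contradiction. *)

definition touching_edges :: "'a set set \<Rightarrow> 'a set \<Rightarrow> 'a set \<Rightarrow> 'a set set" where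
  "touching_edges E S T = {e \<in> E. e \<inter> S \<noteq> {} \<and> e \<inter> T = {}}"

lemma simple_graph_edgeD:
  assumes "simple_graph V E" "{u, w} \<in> E"
  shows "u \<noteq> w" "u \<in> V" "w \<in> V"
  using assms unfolding simple_graph_def by (metis doubleton_eq_iff)+

lemma simple_graph_finite_edges:
  assumes "simple_graph V E"
  shows "finite E"
proof (rule finite_subset)
  show "E \<subseteq> Pow V"
    using assms unfolding simple_graph_def by fastforce
  show "finite (Pow V)"
    using assms unfolding simple_graph_def by simp
qed

lemma edges_ST_eq_touching_edges:
  assumes "simple_graph V E" "S \<inter> T = {}"
  shows "edges_ST V E S T = touching_edges E S T"
proof (rule set_eqI)
  have doubleton_ex: "(\<exists>u w. {x, y} = {u, w} \<and> P u w) \<longleftrightarrow> P x y \<or> P y x" for x y :: 'a and P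
    by (auto simp: doubleton_eq_iff)
  fix e
  show "e \<in> edges_ST V E S T \<longleftrightarrow> e \<in> touching_edges E S T"
  proof (cases "e \<in> E")
    case True
    then obtain x y where "x \<in> V" "y \<in> V" and e: "e = {x, y}"
      using assms(1) unfolding simple_graph_def by blast
    have "e \<in> edges_ST V E S T \<longleftrightarrow> x \<in> S \<and> y \<in> S \<or> y \<in> S \<and> x \<in> S \<or>
        x \<in> S \<and> y \<in> V - (S \<union> T) \<or> y \<in> S \<and> x \<in> V - (S \<union> T)"
      using True unfolding edges_ST_def e by (simp add: doubleton_ex disj_assoc)
    moreover have "e \<in> touching_edges E S T \<longleftrightarrow> (x \<in> S \<or> y \<in> S) \<and> x \<notin> T \<and> y \<notin> T"
      using True unfolding touching_edges_def e by auto
    ultimately show ?thesis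
      using \<open>x \<in> V\<close> \<open>y \<in> V\<close> assms(2) by blast
  qed (simp add: edges_ST_def touching_edges_def)
qed

lemma finite_neighbours:
  assumes "simple_graph V E"
  shows "finite {x. {v, x} \<in> E}"
proof (rule finite_subset)
  show "{x. {v, x} \<in> E} \<subseteq> V"
    using simple_graph_edgeD(3)[OF assms] by blast
  show "finite V"
    using assms unfolding simple_graph_def by simp
qed

lemma degree_eq_card_neighbours:
  assumes "simple_graph V E"
  shows "degree E v = card {x. {v, x} \<in> E}"
proof -
  have "{e \<in> E. v \<in> e} = (\<lambda>x. {v, x}) ` {x. {v, x} \<in> E}"
  proof (intro subset_antisym subsetI)
    fix e assume "e \<in> {e \<in> E. v \<in> e}"
    moreover obtain x y where "e = {x, y}"
      using assms calculation unfolding simple_graph_def by blast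
    ultimately show "e \<in> (\<lambda>x. {v, x}) ` {x. {v, x} \<in> E}"
      by (auto simp: insert_commute)
  qed auto
  moreover have "inj_on (\<lambda>x. {v, x}) X" for X
    by (auto simp: inj_on_def doubleton_eq_iff)
  ultimately show ?thesis
    unfolding degree_def by (simp add: card_image)
qed

lemma simple_graph_image:
  assumes G: "simple_graph V E" and f: "inj_on f V"
  shows "simple_graph (f ` V) ((`) f ` E)"
  unfolding simple_graph_def
proof (intro conjI ballI)
  show "finite (f ` V)"
    using G unfolding simple_graph_def by simp
  fix e assume "e \<in> (`) f ` E"
  then obtain x y where "x \<in> V" "y \<in> V" "x \<noteq> y" "e = {f x, f y}"
    using G unfolding simple_graph_def by auto
  moreover have "f x \<noteq> f y"
    using f calculation by (meson inj_on_def)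
  ultimately show "\<exists>x y. x \<in> f ` V \<and> y \<in> f ` V \<and> x \<noteq> y \<and> e = {x, y}"
    by blast
qed

lemma degree_image:
  assumes "inj f"
  shows "degree ((`) f ` E) (f v) = degree E v"
proof -
  have "{e \<in> (`) f ` E. f v \<in> e} = (`) f ` {e \<in> E. v \<in> e}"
    unfolding Compr_image_eq inj_image_mem_iff[OF assms] ..
  moreover have "inj_on ((`) f) X" for X
    using assms by (meson inj_image_eq_iff inj_onI)
  ultimately show ?thesis
    unfolding degree_def by (simp add: card_image)
qed

lemma touching_edges_image:
  assumes "inj f"
  shows "touching_edges ((`) f ` E) (f ` S) (f ` T) = (`) f ` touching_edges E S T"
  unfolding touching_edges_def Compr_image_eq image_Int[OF assms, symmetric] by simp

lemma move_edge:
  assumes G: "simple_graph V E" and px: "{p, x} \<in> E" and qx: "{q, x} \<notin> E"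
    and "x \<noteq> q" "p \<noteq> q" "q \<in> V"
  defines "E' \<equiv> insert {q, x} (E - {{p, x}})"
  shows "simple_graph V E'"
    and "degree E' v + (if v \<in> {p, x} then 1 else 0) = degree E v + (if v \<in> {q, x} then 1 else 0)"
    and "q \<in> S \<longrightarrow> p \<in> S \<Longrightarrow> p \<in> T \<longrightarrow> q \<in> T \<Longrightarrow>
         card (touching_edges E' S T) \<le> card (touching_edges E S T)"
proof -
  have "x \<in> V"
    using simple_graph_edgeD[OF G px] by simp
  then show "simple_graph V E'"
    using G \<open>x \<noteq> q\<close> \<open>q \<in> V\<close> unfolding simple_graph_def E'_def
    by (metis Diff_subset insertE subsetD)
  have fin: "finite E"
    using G by (rule simple_graph_finite_edges)
  define A where "A = {e \<in> E. v \<in> e}"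
  have "finite A"
    using fin by (simp add: A_def)
  have "card (A - {{p, x}}) + (if v \<in> {p, x} then 1 else 0) = card A"
  proof (cases "v \<in> {p, x}")
    case True
    then have "{p, x} \<in> A"
      using px by (simp add: A_def)
    then show ?thesis
      using card.remove[OF \<open>finite A\<close> \<open>{p, x} \<in> A\<close>] True by simp
  qed (simp add: A_def)
  moreover have "card {e \<in> E'. v \<in> e} = card (A - {{p, x}}) + (if v \<in> {q, x} then 1 else 0)"
  proof -
    have "{e \<in> E'. v \<in> e} = (if v \<in> {q, x} then insert {q, x} else id) (A - {{p, x}})"
      unfolding E'_def A_def by auto
    moreover have "{q, x} \<notin> A - {{p, x}}"
      using qx by (simp add: A_def)
    ultimately show ?thesis
      using \<open>finite A\<close> by simp
  qed
  ultimately show "degree E' v + (if v \<in> {p, x} then 1 else 0) = degree E v + (if v \<in> {q, x} then 1 else 0)"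
    unfolding degree_def A_def[symmetric] by linarith
  assume S: "q \<in> S \<longrightarrow> p \<in> S" and T: "p \<in> T \<longrightarrow> q \<in> T"
  define C where "C = touching_edges E S T"
  have "finite C"
    using fin by (simp add: C_def touching_edges_def)
  show "card (touching_edges E' S T) \<le> card C"
  proof (cases "{q, x} \<in> touching_edges E' S T")
    case True
    then have "{p, x} \<in> C"
      using px S T unfolding C_def touching_edges_def by auto
    have "card (touching_edges E' S T) \<le> card (insert {q, x} (C - {{p, x}}))"
      using \<open>finite C\<close> by (intro card_mono) (auto simp: E'_def C_def touching_edges_def)
    also have "\<dots> \<le> Suc (card (C - {{p, x}}))"
      using \<open>finite C\<close> by (simp add: card_insert_if)
    also have "\<dots> = card C"
      using card.remove[OF \<open>finite C\<close> \<open>{p, x} \<in> C\<close>] by simp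
    finally show ?thesis .
  next
    case False
    then have "touching_edges E' S T \<subseteq> C"
      unfolding E'_def C_def touching_edges_def by auto
    then show ?thesis
      using \<open>finite C\<close> by (rule card_mono[rotated])
  qed
qed

definition private_neighbours :: "'a set set \<Rightarrow> 'a \<Rightarrow> 'a \<Rightarrow> 'a set" where
  "private_neighbours E p q = {x. {p, x} \<in> E \<and> {q, x} \<notin> E \<and> x \<noteq> q}"

lemma finite_private_neighbours:
  assumes "simple_graph V E"
  shows "finite (private_neighbours E p q)"
  using finite_neighbours[OF assms, of p] unfolding private_neighbours_def
  by (rule finite_subset[rotated]) auto

lemma degree_diff_le_card_private_neighbours:
  assumes G: "simple_graph V E" and "p \<noteq> q"
  shows "degree E p - degree E q \<le> card (private_neighbours E p q)"
proof -
  define Np Nq where "Np = {x. {p, x} \<in> E}" and "Nq = {x. {q, x} \<in> E}"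
  have "finite Np" "finite Nq"
    unfolding Np_def Nq_def using finite_neighbours[OF G] by auto
  have "Np - {q} \<subseteq> private_neighbours E p q \<union> (Nq - {p})"
    using simple_graph_edgeD(1)[OF G, of p] unfolding Np_def Nq_def private_neighbours_def by auto
  then have "card (Np - {q}) \<le> card (private_neighbours E p q \<union> (Nq - {p}))"
    using finite_private_neighbours[OF G] \<open>finite Nq\<close> by (intro card_mono) simp_all
  also have "\<dots> \<le> card (private_neighbours E p q) + card (Nq - {p})"
    by (rule card_Un_le)
  finally have "card (Np - {q}) \<le> card (private_neighbours E p q) + card (Nq - {p})" .
  moreover have "q \<in> Np \<longleftrightarrow> p \<in> Nq"
    unfolding Np_def Nq_def by (simp add: insert_commute)
  moreover have "card Np > 0 \<and> card Nq > 0" if "q \<in> Np" "p \<in> Nq"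
    using that \<open>finite Np\<close> \<open>finite Nq\<close> card_gt_0_iff by blast
  ultimately show ?thesis
    using \<open>finite Np\<close> \<open>finite Nq\<close>
    by (auto simp: degree_eq_card_neighbours[OF G] Np_def[symmetric] Nq_def[symmetric]
        card_Diff_singleton_if split: if_splits)
qed

lemma shift_edges:
  assumes "simple_graph V E" "q \<in> V" "p \<noteq> q" "k \<le> card (private_neighbours E p q)"
    and "q \<in> S \<longrightarrow> p \<in> S" "p \<in> T \<longrightarrow> q \<in> T"
  shows "\<exists>E'. simple_graph V E' \<and> degree E' p + k = degree E p \<and> degree E' q = degree E q + k \<and>
    (\<forall>v. v \<noteq> p \<longrightarrow> v \<noteq> q \<longrightarrow> degree E' v = degree E v) \<and>
    card (touching_edges E' S T) \<le> card (touching_edges E S T)"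
  using assms(1,4)
proof (induction k arbitrary: E)
  case 0
  then show ?case by auto
next
  case (Suc k)
  then have "private_neighbours E p q \<noteq> {}"
    by auto
  then obtain x where x: "x \<in> private_neighbours E p q"
    by blast
  then have px: "{p, x} \<in> E" and qx: "{q, x} \<notin> E" and "x \<noteq> q"
    unfolding private_neighbours_def by auto
  have "x \<noteq> p"
    using simple_graph_edgeD(1)[OF Suc.prems(1) px] by simp
  define E1 where "E1 = insert {q, x} (E - {{p, x}})"
  note move = move_edge[OF Suc.prems(1) px qx \<open>x \<noteq> q\<close> \<open>p \<noteq> q\<close> \<open>q \<in> V\<close>, folded E1_def]
  have "private_neighbours E p q - {x} \<subseteq> private_neighbours E1 p q"
    using \<open>x \<noteq> p\<close> \<open>p \<noteq> q\<close> by (auto simp: private_neighbours_def E1_def doubleton_eq_iff)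
  then have "card (private_neighbours E p q - {x}) \<le> card (private_neighbours E1 p q)"
    by (rule card_mono[OF finite_private_neighbours[OF move(1)]])
  moreover have "card (private_neighbours E p q - {x}) = card (private_neighbours E p q) - 1"
    using x finite_private_neighbours[OF Suc.prems(1)] by simp
  ultimately have "k \<le> card (private_neighbours E1 p q)"
    using Suc.prems(2) by linarith
  then obtain E' where E': "simple_graph V E'" "degree E' p + k = degree E1 p"
    "degree E' q = degree E1 q + k" "\<forall>v. v \<noteq> p \<longrightarrow> v \<noteq> q \<longrightarrow> degree E' v = degree E1 v"
    "card (touching_edges E' S T) \<le> card (touching_edges E1 S T)"
    using Suc.IH[OF move(1)] by blast
  have "degree E1 p + 1 = degree E p" "degree E1 q = degree E q + 1"
    using move(2)[of p] move(2)[of q] \<open>x \<noteq> p\<close> \<open>x \<noteq> q\<close> \<open>p \<noteq> q\<close> by auto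
  moreover have "degree E1 v = degree E v" if "v \<noteq> p" "v \<noteq> q" for v
    using move(2)[of v] that by auto
  moreover have "card (touching_edges E1 S T) \<le> card (touching_edges E S T)"
    using move(3) assms(5,6) .
  ultimately show ?case
    using E' by (intro exI[of _ E']) simp
qed

lemma exchange_vertices:
  assumes G: "simple_graph V E" and "a \<in> V" "b \<in> V" and less: "degree E b < degree E a"
    and "b \<in> S \<longrightarrow> a \<in> S" "a \<in> T \<longrightarrow> b \<in> T"
  defines "\<tau> \<equiv> transpose a b"
  shows "\<exists>E'. simple_graph V E' \<and> (\<forall>v. degree E' v = degree E v) \<and>
    card (touching_edges E' (\<tau> ` S) (\<tau> ` T)) \<le> card (touching_edges E S T)"
proof -
  have "a \<noteq> b"
    using less by auto
  obtain H where H: "simple_graph V H" "degree H a + (degree E a - degree E b) = degree E a"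
    "degree H b = degree E b + (degree E a - degree E b)"
    "\<forall>v. v \<noteq> a \<longrightarrow> v \<noteq> b \<longrightarrow> degree H v = degree E v"
    "card (touching_edges H S T) \<le> card (touching_edges E S T)"
    using shift_edges[OF G \<open>b \<in> V\<close> \<open>a \<noteq> b\<close> degree_diff_le_card_private_neighbours[OF G \<open>a \<noteq> b\<close>]]
      assms(5,6) by blast
  define E' where "E' = (`) \<tau> ` H"
  have "\<tau> ` V = V"
    using \<open>a \<in> V\<close> \<open>b \<in> V\<close> by (simp add: \<tau>_def)
  then have "simple_graph V E'"
    using simple_graph_image[OF H(1) inj_on_transpose, of a b] by (simp add: E'_def \<tau>_def)
  moreover have "degree E' v = degree E v" for v
  proof -
    have "degree E' v = degree H (\<tau> v)"
      using degree_image[OF inj_transpose, of a b H "\<tau> v"] by (simp add: E'_def \<tau>_def)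
    also have "\<dots> = degree E v"
      using H(2-4) less by (cases "v = a"; cases "v = b") (simp_all add: \<tau>_def)
    finally show ?thesis .
  qed
  moreover have "card (touching_edges E' (\<tau> ` S) (\<tau> ` T)) = card (touching_edges H S T)"
    unfolding E'_def \<tau>_def touching_edges_image[OF inj_transpose]
    by (rule card_image[OF inj_on_image[OF inj_on_transpose]])
  ultimately show ?thesis
    using H(5) by auto
qed

lemma sum_transpose_image:
  assumes "finite A" "a \<in> A" "b \<notin> A"
  shows "sum f (transpose a b ` A) + f a = sum f A + f b"
proof -
  have "transpose a b ` A = insert b (A - {a})"
    using assms(2,3) by (auto simp: in_transpose_image_iff transpose_def)
  then show ?thesis
    using assms by (simp add: sum.remove[of A a] add_ac)
qed

lemma exchange_vertices_weight:
  fixes d :: "'a \<Rightarrow> nat"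
  assumes "finite V" "S \<subseteq> V" "T \<subseteq> V" "a \<in> V" "b \<in> V" "d b < d a"
    and "b \<in> S \<longrightarrow> a \<in> S" "a \<in> T \<longrightarrow> b \<in> T" "(a \<in> S \<and> b \<notin> S) \<or> (b \<in> T \<and> a \<notin> T)"
  defines "\<tau> \<equiv> transpose a b"
  shows "sum d (\<tau> ` S) + sum d (V - \<tau> ` T) < sum d S + sum d (V - T)"
proof -
  have le: "sum d (\<tau> ` A) \<le> sum d A" and less: "a \<in> A \<and> b \<notin> A \<Longrightarrow> sum d (\<tau> ` A) < sum d A"
    if "finite A" "b \<in> A \<longrightarrow> a \<in> A" for A
    using sum_transpose_image[OF that(1), of a b d] that \<open>d b < d a\<close>
    by (fastforce simp: \<tau>_def)+
  have "V - \<tau> ` T = \<tau> ` (V - T)"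
    using \<open>a \<in> V\<close> \<open>b \<in> V\<close> by (simp add: \<tau>_def image_set_diff[OF inj_transpose])
  moreover have "finite S" "finite (V - T)"
    using assms(1,2) finite_subset by auto
  ultimately show ?thesis
    using le less assms(4-9) by (metis Diff_iff add_le_less_mono add_less_le_mono)
qed

definition rearrangement ::
    "'a set \<Rightarrow> 'a set set \<Rightarrow> 'a set \<Rightarrow> 'a set \<Rightarrow> 'a set set \<Rightarrow> 'a set \<Rightarrow> 'a set \<Rightarrow> bool" where
  "rearrangement V E S T E' S' T' \<longleftrightarrow> simple_graph V E' \<and> (\<forall>v\<in>V. degree E' v = degree E v) \<and>
     S' \<subseteq> V \<and> T' \<subseteq> V \<and> S' \<inter> T' = {} \<and> card S' = card S \<and> card T' = card T \<and>
     card (edges_ST V E' S' T') \<le> card (edges_ST V E S T)"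

lemma rearrangement_refl:
  "simple_graph V E \<Longrightarrow> S \<subseteq> V \<Longrightarrow> T \<subseteq> V \<Longrightarrow> S \<inter> T = {} \<Longrightarrow> rearrangement V E S T E S T"
  by (simp add: rearrangement_def)

lemma rearrangement_trans:
  "rearrangement V E S T E' S' T' \<Longrightarrow> rearrangement V E' S' T' E'' S'' T'' \<Longrightarrow>
   rearrangement V E S T E'' S'' T''"
  by (auto simp: rearrangement_def)

lemma exchange_vertices_rearrangement:
  fixes d :: "'a \<Rightarrow> nat"
  assumes G: "simple_graph V E" and deg: "\<forall>v\<in>V. degree E v = d v"
    and "S \<subseteq> V" "T \<subseteq> V" "S \<inter> T = {}" "a \<in> V" "b \<in> V" "d b < d a"
    and "b \<in> S \<longrightarrow> a \<in> S" "a \<in> T \<longrightarrow> b \<in> T" "(a \<in> S \<and> b \<notin> S) \<or> (b \<in> T \<and> a \<notin> T)"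
  shows "\<exists>E' S' T'. rearrangement V E S T E' S' T' \<and> sum d S' + sum d (V - T') < sum d S + sum d (V - T)"
proof -
  define \<tau> where "\<tau> = transpose a b"
  have "degree E b < degree E a"
    using assms(6-8) deg by simp
  then obtain E' where E': "simple_graph V E'" "\<forall>v. degree E' v = degree E v"
    "card (touching_edges E' (\<tau> ` S) (\<tau> ` T)) \<le> card (touching_edges E S T)"
    using exchange_vertices[OF G \<open>a \<in> V\<close> \<open>b \<in> V\<close> _ assms(9,10)] unfolding \<tau>_def by blast
  have "\<tau> ` V = V"
    using \<open>a \<in> V\<close> \<open>b \<in> V\<close> by (simp add: \<tau>_def)
  then have "\<tau> ` S \<subseteq> V" "\<tau> ` T \<subseteq> V"
    using \<open>S \<subseteq> V\<close> \<open>T \<subseteq> V\<close> by blast+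
  moreover have "\<tau> ` S \<inter> \<tau> ` T = {}"
    using \<open>S \<inter> T = {}\<close> by (simp add: \<tau>_def image_Int[OF inj_transpose, symmetric])
  moreover have "card (\<tau> ` S) = card S" "card (\<tau> ` T) = card T"
    by (simp_all add: \<tau>_def card_image)
  ultimately have "rearrangement V E S T E' (\<tau> ` S) (\<tau> ` T)"
    using E' G \<open>S \<inter> T = {}\<close> by (simp add: rearrangement_def edges_ST_eq_touching_edges)
  moreover have "sum d (\<tau> ` S) + sum d (V - \<tau> ` T) < sum d S + sum d (V - T)"
    unfolding \<tau>_def using G assms(3-11) by (intro exchange_vertices_weight) (simp_all add: simple_graph_def)
  ultimately show ?thesis
    by blast
qed

theorem lemma15:
  fixes V :: "'a set" and E :: "'a set set" and S T :: "'a set"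
  assumes "simple_graph V E"
    and "S \<subseteq> V" and "T \<subseteq> V" and "S \<inter> T = {}"
  shows "\<exists>E' S' T'. simple_graph V E' \<and> (\<forall>v\<in>V. degree E' v = degree E v) \<and>
     S' \<subseteq> V \<and> T' \<subseteq> V \<and> S' \<inter> T' = {} \<and> card S' = card S \<and> card T' = card T \<and>
     (\<forall>s\<in>S'. \<forall>v\<in>V - S'. degree E' s \<le> degree E' v) \<and>
     (\<forall>t\<in>T'. \<forall>v\<in>V - T'. degree E' t \<ge> degree E' v) \<and>
     card (edges_ST V E' S' T') \<le> card (edges_ST V E S T)"
proof -
  define weight where "weight = (\<lambda>(E' :: 'a set set, S', T'). sum (degree E) S' + sum (degree E) (V - T'))"
  obtain E' S' T' where R: "rearrangement V E S T E' S' T'"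
    and least: "\<And>E'' S'' T''. rearrangement V E S T E'' S'' T'' \<Longrightarrow> weight (E', S', T') \<le> weight (E'', S'', T'')"
    using ex_has_least_nat[of "\<lambda>(E', S', T'). rearrangement V E S T E' S' T'" "(E, S, T)" weight]
      rearrangement_refl[OF assms] by auto
  have no_exchange: "degree E' a \<le> degree E' b"
    if "a \<in> V" "b \<in> V" "b \<in> S' \<longrightarrow> a \<in> S'" "a \<in> T' \<longrightarrow> b \<in> T'"
      "(a \<in> S' \<and> b \<notin> S') \<or> (b \<in> T' \<and> a \<notin> T')" for a b
  proof (rule ccontr)
    assume "\<not> degree E' a \<le> degree E' b"
    with R that obtain E'' S'' T'' where "rearrangement V E' S' T' E'' S'' T''"
      and "weight (E'', S'', T'') < weight (E', S', T')"
      using exchange_vertices_rearrangement[of V E' "degree E" S' T' a b]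
      by (auto simp: rearrangement_def weight_def)
    then show False
      using least[OF rearrangement_trans[OF R]] by (meson not_le)
  qed
  have "\<forall>s\<in>S'. \<forall>v\<in>V - S'. degree E' s \<le> degree E' v"
    using no_exchange R unfolding rearrangement_def by blast
  moreover have "\<forall>t\<in>T'. \<forall>v\<in>V - T'. degree E' t \<ge> degree E' v"
    using no_exchange R unfolding rearrangement_def by blast
  ultimately show ?thesis
    using R unfolding rearrangement_def by (intro exI[of _ E'] exI[of _ S'] exI[of _ T']) simp
qed

end
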